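(* Let $f,g:\mathbb R^n\to\mathbb R$ be two integrable log-concave functions with full-dimensional support. Then for any $t_1,t_2\in(0,1]$ and any $\lambda\in[0,1]$, $$M_{t_1^\lambda t_2^{1-\lambda}}^{1/n}\geq\lambda M_{t_1}^{1/n}+(1-\lambda)M_{t_2}^{1/n}.$$ Consequently, $t\mapsto M_t$ is continuous on $(0,1)$.
   Context: For integrable log-concave $f,g$ on $\mathbb R^n$ with full-dimensional support, $t\in(0,1]$ and $x\in\mathrm{supp}\,f+\mathrm{supp}\,g$, let $\mathcal A_t(x)=\{z\in\mathrm{supp}\,f\cap(x-\mathrm{supp}\,g): f(z)g(x-z)\geq t\Vert f\Vert_\infty\Vert g\Vert_\infty\}$ and $M_t=\max_{x_0\in\mathrm{supp}\,f+\mathrm{supp}\,g}|\mathcal A_t(x_0)|$, where $|\cdot|$ is Lebesgue volume. *)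

theory Defs
  imports "HOL-Analysis.Analysis"
begin

definition log_concave :: "('a::real_vector \<Rightarrow> real) \<Rightarrow> bool" where
  "log_concave f \<longleftrightarrow> (\<forall>x. 0 \<le> f x) \<and>
     (\<forall>x y. \<forall>l\<in>{0..1::real}.
        f x powr (1 - l) * f y powr l \<le> f ((1 - l) *\<^sub>R x + l *\<^sub>R y))"

definition supp :: "('a \<Rightarrow> real) \<Rightarrow> 'a set" where
  "supp f = {x. 0 < f x}"

definition sup_norm :: "('a \<Rightarrow> real) \<Rightarrow> real" where
  "sup_norm f = Sup (range f)"

definition minkowski_sum :: "'a::ab_group_add set \<Rightarrow> 'a set \<Rightarrow> 'a set" where
  "minkowski_sum A B = {a + b | a b. a \<in> A \<and> b \<in> B}"

definition At_set :: "('a::ab_group_add \<Rightarrow> real) \<Rightarrow> ('a \<Rightarrow> real) \<Rightarrow> real \<Rightarrow> 'a \<Rightarrow> 'a set" where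
  "At_set f g t x = {z \<in> supp f \<inter> {x - w | w. w \<in> supp g}.
                      t * sup_norm f * sup_norm g \<le> f z * g (x - z)}"

text \<open>M_t = max over x0 in supp f + supp g of the volume of A_t(x0) (written as a supremum).\<close>
definition M_t :: "('a::euclidean_space \<Rightarrow> real) \<Rightarrow> ('a \<Rightarrow> real) \<Rightarrow> real \<Rightarrow> real" where
  "M_t f g t = (SUP x \<in> minkowski_sum (supp f) (supp g). measure lebesgue (At_set f g t x))"

end

theory Submission
  imports Defs
begin

text \<open>Since \<open>(z, w) \<mapsto> f z g w\<close> is log-concave, every \<open>A\<^sub>t(x)\<close> is convex and
  \<open>l A\<^sub>t\<^sub>1(x\<^sub>1) + (1 - l) A\<^sub>t\<^sub>2(x\<^sub>2) \<subseteq> A\<^sub>t(l x\<^sub>1 + (1 - l) x\<^sub>2)\<close> for \<open>t = t\<^sub>1\<^sup>l t\<^sub>2\<^sup>1\<^sup>-\<^sup>l\<close>. The Brunn--Minkowski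
  inequality for convex sets, followed by suprema over \<open>x\<^sub>1\<close> and \<open>x\<^sub>2\<close>, gives the concavity inequality,
  which says that \<open>u \<mapsto> M\<^sub>e\<^sub>x\<^sub>p\<^sub>(\<^sub>-\<^sub>u\<^sub>)\<^sup>1\<^sup>/\<^sup>n\<close> is concave and hence continuous. Brunn--Minkowski is
  derived from the Prekopa--Leindler inequality, which is proved on the line from the one-dimensional
  Brunn--Minkowski inequality via the layer-cake formula and extended to \<open>\<real>\<^sup>n\<close> by Fubini and
  induction on the dimension.\<close>

section \<open>Brunn--Minkowski and Prekopa--Leindler on the real line\<close>

lemma emeasure_lborel_affine_image:
  fixes K :: "real set"
  assumes "K \<in> sets borel" "c > 0"
  shows "emeasure lborel ((\<lambda>x. c * x + d) ` K) = ennreal c * emeasure lborel K"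
proof -
  have "emeasure lebesgue ((\<lambda>x. c *\<^sub>R x + d) ` K) = \<bar>c\<bar> ^ DIM(real) * emeasure lebesgue K"
    by (rule emeasure_lebesgue_affine)
  moreover have "(\<lambda>x. c * x + d) ` K \<in> sets borel"
  proof -
    have "(\<lambda>x. c * x + d) ` K = (\<lambda>x. (x - d) / c) -` K" using assms(2)
      by (auto simp: image_iff field_simps intro!: bexI[of _ "(x - d)/c" for x])
    moreover have "(\<lambda>x. (x - d) / c) \<in> borel_measurable borel" by measurable
    ultimately show ?thesis using measurable_sets[of "\<lambda>x. (x - d) / c" borel borel K] assms(1) by simp
  qed
  ultimately show ?thesis using assms by (simp add: ennreal_mult)
qed

text \<open>Place \<open>l K\<close> to the left and \<open>(1 - l) K'\<close> to the right of the point \<open>l max K + (1 - l) min K'\<close>;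
  both translates lie in \<open>C\<close> and overlap in at most that point.\<close>
lemma brunn_minkowski_real_compact:
  fixes K K' C :: "real set"
  assumes "compact K" "compact K'" "K \<noteq> {}" "K' \<noteq> {}" "0 < l" "l < 1" "C \<in> sets borel"
    and sub: "\<And>x y. x \<in> K \<Longrightarrow> y \<in> K' \<Longrightarrow> l * x + (1 - l) * y \<in> C"
  shows "ennreal l * emeasure lborel K + ennreal (1 - l) * emeasure lborel K' \<le> emeasure lborel C"
proof -
  obtain a where a: "a \<in> K" "\<And>x. x \<in> K \<Longrightarrow> x \<le> a"
    using compact_attains_sup[OF assms(1,3)] by blast
  obtain b where b: "b \<in> K'" "\<And>x. x \<in> K' \<Longrightarrow> b \<le> x"
    using compact_attains_inf[OF assms(2,4)] by blast
  define m where "m = l * a + (1 - l) * b"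
  define S1 where "S1 = (\<lambda>x. l * x + (1 - l) * b) ` K"
  define S2 where "S2 = (\<lambda>y. (1 - l) * y + l * a) ` K'"
  have KB: "K \<in> sets borel" "K' \<in> sets borel" using assms by (auto intro: borel_compact)
  have e1: "emeasure lborel S1 = ennreal l * emeasure lborel K"
    unfolding S1_def using emeasure_lborel_affine_image[OF KB(1) assms(5)] by simp
  have e2: "emeasure lborel S2 = ennreal (1 - l) * emeasure lborel K'"
    unfolding S2_def using emeasure_lborel_affine_image[OF KB(2)] assms(6) by simp
  have B1: "S1 \<in> sets borel" "S2 \<in> sets borel" unfolding S1_def S2_def
    by (auto intro!: borel_compact compact_continuous_image continuous_intros assms)
  have S1m: "S1 \<subseteq> {..m}" unfolding S1_def m_def using a assms(5) by (auto intro: mult_left_mono)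
  have S2m: "S2 \<subseteq> {m..}"
  proof
    fix z assume "z \<in> S2"
    then obtain y where y: "y \<in> K'" "z = (1 - l) * y + l * a" unfolding S2_def by auto
    have "(1 - l) * b \<le> (1 - l) * y" using b(2)[OF y(1)] assms(6) by (intro mult_left_mono) auto
    thus "z \<in> {m..}" using y unfolding m_def by auto
  qed
  have SC: "S1 \<union> (S2 - {m}) \<subseteq> C" unfolding S1_def S2_def using sub a b
    by (auto simp: algebra_simps)
  have "emeasure lborel (S2 - {m}) = emeasure lborel S2"
    by (rule emeasure_Diff_null_set) (use B1 in auto)
  hence "emeasure lborel (S1 \<union> (S2 - {m})) = emeasure lborel S1 + emeasure lborel S2"
    using plus_emeasure[of S1 lborel "S2 - {m}"] B1 S1m S2m by fastforce
  moreover have "emeasure lborel (S1 \<union> (S2 - {m})) \<le> emeasure lborel C"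
    using SC assms(7) by (intro emeasure_mono) auto
  ultimately show ?thesis using e1 e2 by simp
qed

lemma emeasure_lborel_le_SUP_compact:
  fixes A :: "real set"
  assumes A: "A \<in> sets borel"
  shows "emeasure lborel A \<le> (SUP K\<in>{K. K \<subseteq> A \<and> compact K}. emeasure lborel K)"
    (is "_ \<le> ?R")
proof -
  define AN where "AN N = A \<inter> {- real N..real N}" for N
  have ANb: "AN N \<in> sets borel" for N unfolding AN_def using A by auto
  have eqA: "(SUP N. emeasure lborel (AN N)) = emeasure lborel (\<Union>N. AN N)"
    by (rule SUP_emeasure_incseq) (use ANb in \<open>auto simp: incseq_def AN_def\<close>)
  moreover have eqU: "(\<Union>N. AN N) = A"
  proof (auto simp: AN_def)
    fix x assume "x \<in> A"
    obtain N :: nat where "\<bar>x\<bar> \<le> real N" using real_arch_simple by blast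
    thus "\<exists>N. - real N \<le> x \<and> x \<le> real N" by (intro exI[of _ N]) auto
  qed
  moreover have le: "emeasure lborel (AN N) \<le> ?R" for N
  proof (rule ennreal_le_epsilon)
    fix e :: real assume "0 < e"
    have "AN N \<in> sets lebesgue" using ANb by simp
    then obtain T where T: "closed T" "T \<subseteq> AN N" "AN N - T \<in> lmeasurable"
        "emeasure lebesgue (AN N - T) < ennreal e"
      using sets_lebesgue_inner_closed \<open>0 < e\<close> by metis
    have "compact T" using T(1,2) unfolding AN_def
      by (meson bounded_closed_interval bounded_subset compact_eq_bounded_closed inf.boundedE)
    have Tb: "T \<in> sets borel" using T(1) by auto
    have "emeasure lborel (AN N) = emeasure lborel T + emeasure lborel (AN N - T)"
      using plus_emeasure[of T lborel "AN N - T"] Tb ANb T(2)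
      by (simp add: Un_absorb1)
    also have "emeasure lborel (AN N - T) \<le> ennreal e"
      using T(4) Tb ANb by simp
    also have "emeasure lborel T \<le> ?R"
      using T(2) \<open>compact T\<close> unfolding AN_def by (intro SUP_upper) auto
    finally show "emeasure lborel (AN N) \<le> ?R + ennreal e" by (simp add: add_mono)
  qed
  have "(SUP N. emeasure lborel (AN N)) \<le> ?R" by (rule SUP_least) (rule le)
  thus ?thesis using eqA eqU by simp
qed

lemma ennreal_mult_SUP_add_le:
  fixes c y z :: ennreal
  assumes "S \<noteq> {}" "\<And>K. K \<in> S \<Longrightarrow> c * f K + y \<le> z"
  shows "c * (SUP K\<in>S. f K) + y \<le> z"
proof -
  have "c * (SUP K\<in>S. f K) + y = (SUP K\<in>S. c * f K + y)"
    by (simp add: SUP_mult_left_ennreal ennreal_SUP_add_left assms(1))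
  then show ?thesis by (simp add: SUP_least assms)
qed

lemma brunn_minkowski_real:
  fixes A B C :: "real set"
  assumes "A \<in> sets borel" "B \<in> sets borel" "A \<noteq> {}" "B \<noteq> {}" "0 < l" "l < 1" "C \<in> sets borel"
    and sub: "\<And>x y. x \<in> A \<Longrightarrow> y \<in> B \<Longrightarrow> l * x + (1 - l) * y \<in> C"
  shows "ennreal l * emeasure lborel A + ennreal (1 - l) * emeasure lborel B \<le> emeasure lborel C"
proof -
  obtain a0 b0 where ab: "a0 \<in> A" "b0 \<in> B" using assms(3,4) by blast
  have compacts: "ennreal l * emeasure lborel K + ennreal (1 - l) * emeasure lborel K'
      \<le> emeasure lborel C"
    if "K \<subseteq> A" "compact K" "K' \<subseteq> B" "compact K'" for K K'
  proof -
    have "ennreal l * emeasure lborel K + ennreal (1 - l) * emeasure lborel K'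
      \<le> ennreal l * emeasure lborel (insert a0 K) + ennreal (1 - l) * emeasure lborel (insert b0 K')"
      using that by (intro add_mono mult_left_mono emeasure_mono) (auto intro: borel_compact)
    also have "\<dots> \<le> emeasure lborel C"
      using that ab assms sub by (intro brunn_minkowski_real_compact) auto
    finally show ?thesis .
  qed
  have compact_left: "ennreal l * emeasure lborel K + ennreal (1 - l) * emeasure lborel B
      \<le> emeasure lborel C"
    if "K \<subseteq> A" "compact K" for K
  proof -
    have "ennreal (1 - l) * emeasure lborel B + ennreal l * emeasure lborel K
       \<le> ennreal (1 - l) * (SUP K\<in>{K. K \<subseteq> B \<and> compact K}. emeasure lborel K)
         + ennreal l * emeasure lborel K"
      using assms by (intro add_mono mult_left_mono emeasure_lborel_le_SUP_compact) auto
    also have "\<dots> \<le> emeasure lborel C"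
      by (rule ennreal_mult_SUP_add_le)
        (use compacts that in \<open>auto simp: add.commute intro: exI[of _ "{}"]\<close>)
    finally show ?thesis by (simp add: add.commute)
  qed
  have "ennreal l * emeasure lborel A + ennreal (1 - l) * emeasure lborel B
      \<le> ennreal l * (SUP K\<in>{K. K \<subseteq> A \<and> compact K}. emeasure lborel K)
        + ennreal (1 - l) * emeasure lborel B"
    using assms by (intro add_mono mult_left_mono emeasure_lborel_le_SUP_compact) auto
  also have "\<dots> \<le> emeasure lborel C"
    by (rule ennreal_mult_SUP_add_le) (use compact_left in \<open>auto intro: exI[of _ "{}"]\<close>)
  finally show ?thesis .
qed


lemma emeasure_lborel_Ico_01_below:
  fixes w :: ennreal
  shows "emeasure lborel {u::real. 0 \<le> u \<and> u < 1 \<and> ennreal u \<le> w} = min w 1"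
proof (cases "w \<ge> 1")
  case True
  hence "{u::real. 0 \<le> u \<and> u < 1 \<and> ennreal u \<le> w} = {0..<1}"
    by (auto intro: order.trans[of _ 1 w] simp: ennreal_leI)
  thus ?thesis using True by (simp add: min_absorb2)
next
  case False
  then obtain r where r: "w = ennreal r" "0 \<le> r" "r < 1"
    by (cases w rule: ennreal_cases) (auto simp: not_le)
  hence "{u::real. 0 \<le> u \<and> u < 1 \<and> ennreal u \<le> w} = {0..r}"
    by (auto simp: ennreal_le_iff)
  thus ?thesis using r by (simp add: min_absorb1 ennreal_leI)
qed

lemma nn_integral_min_1_layer_cake:
  fixes F :: "real \<Rightarrow> ennreal"
  assumes [measurable]: "F \<in> borel_measurable borel"
  shows "(\<integral>\<^sup>+x. min (F x) 1 \<partial>lborel)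
       = (\<integral>\<^sup>+u. indicator {0..<1} u * emeasure lborel {x. ennreal u \<le> F x} \<partial>lborel)"
proof -
  define P where "P x u = (indicator {(x,u). 0 \<le> u \<and> u < 1 \<and> ennreal u \<le> F x} (x,u) :: ennreal)"
    for x u :: real
  have Pm: "case_prod P \<in> borel_measurable (lborel \<Otimes>\<^sub>M lborel)"
    unfolding P_def by measurable
  have "(\<integral>\<^sup>+x. min (F x) 1 \<partial>lborel) = (\<integral>\<^sup>+x. (\<integral>\<^sup>+u. P x u \<partial>lborel) \<partial>lborel)"
  proof (rule nn_integral_cong)
    fix x
    have "(\<integral>\<^sup>+u. P x u \<partial>lborel)
        = (\<integral>\<^sup>+u. indicator {u::real. 0 \<le> u \<and> u < 1 \<and> ennreal u \<le> F x} u \<partial>lborel)"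
      by (rule nn_integral_cong) (auto simp: P_def indicator_def)
    also have "\<dots> = min (F x) 1"
      by (subst nn_integral_indicator) (auto simp: emeasure_lborel_Ico_01_below)
    finally show "min (F x) 1 = (\<integral>\<^sup>+u. P x u \<partial>lborel)" by simp
  qed
  also have "\<dots> = (\<integral>\<^sup>+u. (\<integral>\<^sup>+x. P x u \<partial>lborel) \<partial>lborel)"
    using lborel_pair.Fubini'[OF Pm] by simp
  also have "\<dots> = (\<integral>\<^sup>+u. indicator {0..<1} u * emeasure lborel {x. ennreal u \<le> F x} \<partial>lborel)"
  proof (rule nn_integral_cong)
    fix u :: real
    have "(\<integral>\<^sup>+x. P x u \<partial>lborel)
        = (\<integral>\<^sup>+x. indicator {0..<1} u * indicator {x. ennreal u \<le> F x} x \<partial>lborel)"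
      by (rule nn_integral_cong) (auto simp: P_def indicator_def)
    also have "\<dots> = indicator {0..<1} u * emeasure lborel {x. ennreal u \<le> F x}"
      by (subst nn_integral_cmult_indicator) auto
    finally show "(\<integral>\<^sup>+x. P x u \<partial>lborel) = indicator {0..<1} u * emeasure lborel {x. ennreal u \<le> F x}" .
  qed
  finally show ?thesis .
qed

lemma measurable_emeasure_superlevel:
  fixes F :: "real \<Rightarrow> ennreal"
  assumes [measurable]: "F \<in> borel_measurable borel"
  shows "(\<lambda>u. emeasure lborel {x. ennreal u \<le> F x}) \<in> borel_measurable lborel"
proof -
  have "{p \<in> space (lborel \<Otimes>\<^sub>M lborel). ennreal (fst p) \<le> F (snd p)} \<in> sets (lborel \<Otimes>\<^sub>M lborel)"
    by measurable
  hence "{(u,x). ennreal u \<le> F x} \<in> sets (lborel \<Otimes>\<^sub>M lborel)"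
    by (simp add: space_pair_measure case_prod_beta')
  from lborel.measurable_emeasure_Pair[OF this] show ?thesis
    by (simp add: vimage_def)
qed

text \<open>The superlevel sets at each height \<open>u < 1\<close> are nonempty, so Brunn--Minkowski applies to them;
  integrating over \<open>u\<close> gives the inequality for the truncations at height \<open>1\<close>.\<close>
lemma prekopa_leindler_real_truncated_1:
  fixes F G H :: "real \<Rightarrow> ennreal"
  assumes [measurable]: "F \<in> borel_measurable borel" "G \<in> borel_measurable borel"
      "H \<in> borel_measurable borel"
    and l: "0 < l" "l < 1"
    and hyp: "\<And>x y u. 0 \<le> u \<Longrightarrow> ennreal u \<le> F x \<Longrightarrow> ennreal u \<le> G y
      \<Longrightarrow> ennreal u \<le> H (l * x + (1 - l) * y)"
    and F1: "\<exists>x. 1 \<le> F x" and G1: "\<exists>y. 1 \<le> G y"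
  shows "ennreal l * (\<integral>\<^sup>+x. min (F x) 1 \<partial>lborel) + ennreal (1 - l) * (\<integral>\<^sup>+x. min (G x) 1 \<partial>lborel)
         \<le> (\<integral>\<^sup>+x. H x \<partial>lborel)"
proof -
  note mF = measurable_emeasure_superlevel[of F] and mG = measurable_emeasure_superlevel[of G]
  have "ennreal l * (\<integral>\<^sup>+x. min (F x) 1 \<partial>lborel) + ennreal (1 - l) * (\<integral>\<^sup>+x. min (G x) 1 \<partial>lborel)
     = (\<integral>\<^sup>+u. ennreal l * (indicator {0..<1} u * emeasure lborel {x. ennreal u \<le> F x}) \<partial>lborel)
       + (\<integral>\<^sup>+u. ennreal (1 - l) * (indicator {0..<1} u * emeasure lborel {x. ennreal u \<le> G x}) \<partial>lborel)"
    using mF mG by (simp add: nn_integral_min_1_layer_cake nn_integral_cmult)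
  also have "\<dots> = (\<integral>\<^sup>+u. ennreal l * (indicator {0..<1} u * emeasure lborel {x. ennreal u \<le> F x})
       + ennreal (1 - l) * (indicator {0..<1} u * emeasure lborel {x. ennreal u \<le> G x}) \<partial>lborel)"
    using mF mG by (intro nn_integral_add[symmetric]) auto
  also have "\<dots> \<le> (\<integral>\<^sup>+u. indicator {0..<1} u * emeasure lborel {x. ennreal u \<le> H x} \<partial>lborel)"
  proof (rule nn_integral_mono)
    fix u :: real
    show "ennreal l * (indicator {0..<1} u * emeasure lborel {x. ennreal u \<le> F x})
       + ennreal (1 - l) * (indicator {0..<1} u * emeasure lborel {x. ennreal u \<le> G x})
       \<le> indicator {0..<1} u * emeasure lborel {x. ennreal u \<le> H x}"
    proof (cases "u \<in> {0..<1}")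
      case True
      have "ennreal u \<le> 1" using True by simp
      hence "{x. ennreal u \<le> F x} \<noteq> {}" "{x. ennreal u \<le> G x} \<noteq> {}"
        using F1 G1 order.trans[OF \<open>ennreal u \<le> 1\<close>] by auto
      hence "ennreal l * emeasure lborel {x. ennreal u \<le> F x}
          + ennreal (1 - l) * emeasure lborel {x. ennreal u \<le> G x}
          \<le> emeasure lborel {x. ennreal u \<le> H x}"
        using l True hyp by (intro brunn_minkowski_real) auto
      thus ?thesis using True by simp
    qed simp
  qed
  also have "\<dots> = (\<integral>\<^sup>+x. min (H x) 1 \<partial>lborel)" by (simp add: nn_integral_min_1_layer_cake)
  also have "\<dots> \<le> (\<integral>\<^sup>+x. H x \<partial>lborel)" by (intro nn_integral_mono) auto
  finally show ?thesis .
qed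

lemma nn_integral_truncation_approx:
  fixes F :: "real \<Rightarrow> ennreal"
  assumes [measurable]: "F \<in> borel_measurable borel" and c: "ennreal c < (\<integral>\<^sup>+x. F x \<partial>lborel)"
  obtains p where "0 < p" "\<exists>x. ennreal p < F x" "ennreal c < (\<integral>\<^sup>+x. min (F x) (ennreal p) \<partial>lborel)"
proof -
  define S where "S = (SUP x. F x)"
  have FS: "F x \<le> S" for x unfolding S_def by (rule SUP_upper) auto
  have "S \<noteq> 0"
  proof
    assume "S = 0"
    hence "\<And>x. F x = 0" using FS by (metis le_zero_eq)
    thus False using c by simp
  qed
  hence "{..<S} \<noteq> {}" using not_gr_zero by blast
  from ennreal_Sup_countable_SUP[OF this] obtain h :: "nat \<Rightarrow> ennreal"
    where h: "incseq h" "range h \<subseteq> {..<S}" "Sup {..<S} = (SUP i. h i)"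
    by blast
  have SS: "Sup {..<S} = S"
    by (rule Sup_eqI) (auto intro: dense_le)
  have "(\<integral>\<^sup>+x. F x \<partial>lborel) = (\<integral>\<^sup>+x. (SUP i. min (F x) (h i)) \<partial>lborel)"
  proof (rule nn_integral_cong)
    fix x
    have "(SUP i. min (F x) (h i)) = inf (F x) (SUP i. h i)"
      using inf_SUP[of "F x" h UNIV] by (simp add: inf_min)
    also have "\<dots> = F x" using h(3) SS FS[of x] by (simp add: inf_min min_absorb1)
    finally show "F x = (SUP i. min (F x) (h i))" by simp
  qed
  also have "\<dots> = (SUP i. (\<integral>\<^sup>+x. min (F x) (h i) \<partial>lborel))"
    by (rule nn_integral_monotone_convergence_SUP)
      (use h(1) in \<open>auto simp: incseq_def le_fun_def min.coboundedI2\<close>)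
  finally obtain i where i: "ennreal c < (\<integral>\<^sup>+x. min (F x) (h i) \<partial>lborel)"
    using c by (auto simp: less_SUP_iff)
  have "h i < S" using h(2) by auto
  then obtain x where x: "h i < F x" unfolding S_def by (auto simp: less_SUP_iff)
  have "h i < top" using \<open>h i < S\<close> top.not_eq_extremum by fastforce
  then obtain p where p: "h i = ennreal p" "0 \<le> p" by (cases "h i" rule: ennreal_cases) auto
  have "p \<noteq> 0"
  proof
    assume "p = 0"
    hence "(\<integral>\<^sup>+x. min (F x) (h i) \<partial>lborel) = 0" using p by simp
    thus False using i by simp
  qed
  thus ?thesis using p x i by (intro that[of p]) auto
qed

lemma ennreal_le_mult_inverse_iff:
  assumes "0 < p" "0 \<le> u"
  shows "ennreal u \<le> X * ennreal (1 / p) \<longleftrightarrow> ennreal (u * p) \<le> X"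
proof
  assume "ennreal u \<le> X * ennreal (1 / p)"
  hence "ennreal u * ennreal p \<le> X * ennreal (1 / p) * ennreal p" by (rule mult_right_mono) simp
  thus "ennreal (u * p) \<le> X" using assms by (simp add: mult.assoc ennreal_mult[symmetric])
next
  assume "ennreal (u * p) \<le> X"
  hence "ennreal (u * p) * ennreal (1 / p) \<le> X * ennreal (1 / p)" by (rule mult_right_mono) simp
  thus "ennreal u \<le> X * ennreal (1 / p)" using assms by (simp add: ennreal_mult[symmetric])
qed

lemma min_mult_right_ennreal: "min a b * (c::ennreal) = min (a * c) (b * c)"
proof (cases "a \<le> b")
  case True
  then show ?thesis by (simp add: min_def mult_right_mono)
next
  case False
  hence "b * c \<le> a * c" by (simp add: mult_right_mono)
  with False show ?thesis by (auto simp: min_def intro: antisym)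
qed

lemma nn_integral_min_1_rescale:
  assumes "0 < p" "F \<in> borel_measurable M"
  shows "(\<integral>\<^sup>+x. min (F x * ennreal (1 / p)) 1 \<partial>M) = (\<integral>\<^sup>+x. min (F x) (ennreal p) \<partial>M) * ennreal (1 / p)"
proof -
  have "(\<integral>\<^sup>+x. min (F x * ennreal (1 / p)) 1 \<partial>M) = (\<integral>\<^sup>+x. min (F x) (ennreal p) * ennreal (1 / p) \<partial>M)"
    using assms(1) by (intro nn_integral_cong) (simp add: min_mult_right_ennreal ennreal_mult[symmetric])
  also have "\<dots> = (\<integral>\<^sup>+x. min (F x) (ennreal p) \<partial>M) * ennreal (1 / p)"
    using assms(2) by (intro nn_integral_multc) measurable
  finally show ?thesis .
qed

text \<open>Rescaling \<open>F\<close>, \<open>G\<close>, \<open>H\<close> by \<open>1/p\<close>, \<open>1/q\<close> and \<open>1/(p\<^sup>l q\<^sup>1\<^sup>-\<^sup>l)\<close> reduces to heights \<open>1\<close>; the hypothesis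
  for the rescaled functions is the original one at the heights \<open>u p\<close> and \<open>u q\<close>.\<close>
lemma prekopa_leindler_real_truncated:
  fixes F G H :: "real \<Rightarrow> ennreal"
  assumes [measurable]: "F \<in> borel_measurable borel" "G \<in> borel_measurable borel"
      "H \<in> borel_measurable borel"
    and l: "0 < l" "l < 1"
    and hyp: "\<And>x y a b. 0 \<le> a \<Longrightarrow> 0 \<le> b \<Longrightarrow> ennreal a \<le> F x \<Longrightarrow> ennreal b \<le> G y
      \<Longrightarrow> ennreal (a powr l * b powr (1 - l)) \<le> H (l * x + (1 - l) * y)"
    and p: "0 < p" "\<exists>x. ennreal p < F x" and q: "0 < q" "\<exists>y. ennreal q < G y"
  shows "ennreal l * ((\<integral>\<^sup>+x. min (F x) (ennreal p) \<partial>lborel) * ennreal (1 / p))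
       + ennreal (1 - l) * ((\<integral>\<^sup>+x. min (G x) (ennreal q) \<partial>lborel) * ennreal (1 / q))
       \<le> (\<integral>\<^sup>+x. H x \<partial>lborel) * ennreal (1 / (p powr l * q powr (1 - l)))"
proof -
  define c where "c = p powr l * q powr (1 - l)"
  have c: "0 < c" unfolding c_def using p q by simp
  define F1 where "F1 x = F x * ennreal (1 / p)" for x
  define G1 where "G1 x = G x * ennreal (1 / q)" for x
  define H1 where "H1 x = H x * ennreal (1 / c)" for x
  have hyp1: "ennreal u \<le> H1 (l * x + (1 - l) * y)"
    if u: "0 \<le> u" "ennreal u \<le> F1 x" "ennreal u \<le> G1 y" for x y u
  proof -
    have "ennreal (u * p) \<le> F x" "ennreal (u * q) \<le> G y"
      using u p q by (simp_all add: F1_def G1_def ennreal_le_mult_inverse_iff)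
    hence "ennreal ((u * p) powr l * (u * q) powr (1 - l)) \<le> H (l * x + (1 - l) * y)"
      using hyp u p q by simp
    moreover have "(u * p) powr l * (u * q) powr (1 - l) = u * c"
    proof (cases "u = 0")
      case False
      hence "(u * p) powr l * (u * q) powr (1 - l) = (u powr l * u powr (1 - l)) * c"
        using u p q by (simp add: powr_mult c_def)
      also have "u powr l * u powr (1 - l) = u" using False u by (simp add: powr_add[symmetric])
      finally show ?thesis .
    qed simp
    ultimately show ?thesis using u c by (simp add: H1_def ennreal_le_mult_inverse_iff)
  qed
  have "\<exists>x. 1 \<le> F1 x" "\<exists>y. 1 \<le> G1 y"
    using p q ennreal_le_mult_inverse_iff[of _ 1]
    by (auto simp: F1_def G1_def ennreal_1[symmetric] simp del: ennreal_1 dest: less_imp_le)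
  with hyp1 l have "ennreal l * (\<integral>\<^sup>+x. min (F1 x) 1 \<partial>lborel) + ennreal (1 - l) * (\<integral>\<^sup>+x. min (G1 x) 1 \<partial>lborel)
      \<le> (\<integral>\<^sup>+x. H1 x \<partial>lborel)"
    by (intro prekopa_leindler_real_truncated_1) (auto simp: F1_def G1_def H1_def)
  moreover have "(\<integral>\<^sup>+x. H1 x \<partial>lborel) = (\<integral>\<^sup>+x. H x \<partial>lborel) * ennreal (1 / c)"
    unfolding H1_def by (rule nn_integral_multc) measurable
  ultimately show ?thesis
    using p(1) q(1) by (simp add: F1_def G1_def c_def nn_integral_min_1_rescale)
qed

lemma prekopa_leindler_real_strict:
  fixes F G H :: "real \<Rightarrow> ennreal"
  assumes [measurable]: "F \<in> borel_measurable borel" "G \<in> borel_measurable borel"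
      "H \<in> borel_measurable borel"
    and l: "0 < l" "l < 1"
    and hyp: "\<And>x y a b. 0 \<le> a \<Longrightarrow> 0 \<le> b \<Longrightarrow> ennreal a \<le> F x \<Longrightarrow> ennreal b \<le> G y
      \<Longrightarrow> ennreal (a powr l * b powr (1 - l)) \<le> H (l * x + (1 - l) * y)"
    and a: "0 < a" "ennreal a < (\<integral>\<^sup>+x. F x \<partial>lborel)"
    and b: "0 < b" "ennreal b < (\<integral>\<^sup>+x. G x \<partial>lborel)"
  shows "ennreal (a powr l * b powr (1 - l)) \<le> (\<integral>\<^sup>+x. H x \<partial>lborel)"
proof -
  obtain p where p: "0 < p" "\<exists>x. ennreal p < F x" "ennreal a < (\<integral>\<^sup>+x. min (F x) (ennreal p) \<partial>lborel)"
    using nn_integral_truncation_approx[OF assms(1) a(2)] by blast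
  obtain q where q: "0 < q" "\<exists>y. ennreal q < G y" "ennreal b < (\<integral>\<^sup>+x. min (G x) (ennreal q) \<partial>lborel)"
    using nn_integral_truncation_approx[OF assms(2) b(2)] by blast
  define c where "c = p powr l * q powr (1 - l)"
  have c: "0 < c" unfolding c_def using p q by simp
  have "a powr l * b powr (1 - l) / c = (a / p) powr l * (b / q) powr (1 - l)"
    using a b p q by (simp add: c_def powr_divide)
  also have "\<dots> \<le> l * (a / p) + (1 - l) * (b / q)"
    using l a b p q by (intro Youngs_inequality_0) auto
  finally have "ennreal (a powr l * b powr (1 - l) / c) \<le> ennreal (l * (a / p) + (1 - l) * (b / q))"
    by (rule ennreal_leI)
  also have "\<dots> = ennreal l * ennreal (a / p) + ennreal (1 - l) * ennreal (b / q)"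
    using l a b p q by (simp add: ennreal_plus ennreal_mult[symmetric] del: times_divide_eq_right)
  also have "\<dots> \<le> ennreal l * ((\<integral>\<^sup>+x. min (F x) (ennreal p) \<partial>lborel) * ennreal (1 / p))
      + ennreal (1 - l) * ((\<integral>\<^sup>+x. min (G x) (ennreal q) \<partial>lborel) * ennreal (1 / q))"
  proof (intro add_mono mult_left_mono)
    have "ennreal a * ennreal (1 / p) \<le> (\<integral>\<^sup>+x. min (F x) (ennreal p) \<partial>lborel) * ennreal (1 / p)"
      using p(3) by (intro mult_right_mono) auto
    thus "ennreal (a / p) \<le> (\<integral>\<^sup>+x. min (F x) (ennreal p) \<partial>lborel) * ennreal (1 / p)"
      using a p by (simp add: ennreal_mult[symmetric])
    have "ennreal b * ennreal (1 / q) \<le> (\<integral>\<^sup>+x. min (G x) (ennreal q) \<partial>lborel) * ennreal (1 / q)"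
      using q(3) by (intro mult_right_mono) auto
    thus "ennreal (b / q) \<le> (\<integral>\<^sup>+x. min (G x) (ennreal q) \<partial>lborel) * ennreal (1 / q)"
      using b q by (simp add: ennreal_mult[symmetric])
  qed auto
  also have "\<dots> \<le> (\<integral>\<^sup>+x. H x \<partial>lborel) * ennreal (1 / c)"
    unfolding c_def by (rule prekopa_leindler_real_truncated[OF assms(1-3) l hyp p(1,2) q(1,2)])
  finally show ?thesis
    using c a b by (simp add: ennreal_le_mult_inverse_iff)
qed

text \<open>The hypothesis \<open>H (l x + (1 - l) y) \<ge> F x\<^sup>l G y\<^sup>1\<^sup>-\<^sup>l\<close> is stated through real minorants \<open>a \<le> F x\<close>,
  \<open>b \<le> G y\<close>, since \<^const>\<open>powr\<close> is not available on \<^typ>\<open>ennreal\<close>.\<close>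
lemma prekopa_leindler_real:
  fixes F G H :: "real \<Rightarrow> ennreal"
  assumes [measurable]: "F \<in> borel_measurable borel" "G \<in> borel_measurable borel"
      "H \<in> borel_measurable borel"
    and l: "0 < l" "l < 1"
    and hyp: "\<And>x y a b. 0 \<le> a \<Longrightarrow> 0 \<le> b \<Longrightarrow> ennreal a \<le> F x \<Longrightarrow> ennreal b \<le> G y
      \<Longrightarrow> ennreal (a powr l * b powr (1 - l)) \<le> H (l * x + (1 - l) * y)"
    and ab: "0 \<le> a" "0 \<le> b" "ennreal a \<le> (\<integral>\<^sup>+x. F x \<partial>lborel)" "ennreal b \<le> (\<integral>\<^sup>+x. G x \<partial>lborel)"
  shows "ennreal (a powr l * b powr (1 - l)) \<le> (\<integral>\<^sup>+x. H x \<partial>lborel)"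
proof (cases "a = 0 \<or> b = 0 \<or> (\<integral>\<^sup>+x. H x \<partial>lborel) = \<infinity>")
  case False
  then obtain r where r: "(\<integral>\<^sup>+x. H x \<partial>lborel) = ennreal r" "0 \<le> r" and a: "0 < a" and b: "0 < b"
    using ab by (cases "(\<integral>\<^sup>+x. H x \<partial>lborel)" rule: ennreal_cases) auto
  have "a powr l * b powr (1 - l) \<le> r"
  proof (rule field_le_mult_one_interval)
    fix \<theta> :: real assume \<theta>: "0 < \<theta>" "\<theta> < 1"
    have "ennreal ((\<theta> * a) powr l * (\<theta> * b) powr (1 - l)) \<le> (\<integral>\<^sup>+x. H x \<partial>lborel)"
      using a b \<theta> less_le_trans[OF _ ab(3), of "\<theta> * a"] less_le_trans[OF _ ab(4), of "\<theta> * b"]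
      by (intro prekopa_leindler_real_strict[OF assms(1-3) l hyp]) (auto simp: ennreal_less_iff)
    moreover have "(\<theta> * a) powr l * (\<theta> * b) powr (1 - l) = \<theta> * (a powr l * b powr (1 - l))"
      using a b \<theta> by (simp add: powr_mult powr_add[symmetric] mult_ac)
    ultimately show "\<theta> * (a powr l * b powr (1 - l)) \<le> r"
      using r by (simp add: ennreal_le_iff)
  qed
  thus ?thesis using r by (simp add: ennreal_leI)
qed auto

section \<open>Prekopa--Leindler in \<open>\<real>\<^sup>n\<close>\<close>

lemma measurable_PiM_fun_upd_section:
  assumes "K \<in> borel_measurable (PiM (insert i I) (\<lambda>_. lborel :: real measure))"
  shows "(\<lambda>x. K (x(i := y))) \<in> borel_measurable (PiM I (\<lambda>_. lborel))"
proof -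
  have "(\<lambda>x. x(i := y)) \<in> measurable (PiM I (\<lambda>_. lborel)) (PiM (insert i I) (\<lambda>_. lborel :: real measure))"
    by (rule measurable_fun_upd[where J=I]) auto
  from measurable_comp[OF this assms] show ?thesis by (simp add: comp_def)
qed

lemma measurable_PiM_nn_integral_section:
  fixes I :: "'i set"
  assumes "finite I"
    and [measurable]: "K \<in> borel_measurable (PiM (insert i I) (\<lambda>_. lborel :: real measure))"
  shows "(\<lambda>y. \<integral>\<^sup>+x. K (x(i := y)) \<partial>PiM I (\<lambda>_. lborel)) \<in> borel_measurable borel"
proof -
  interpret product_sigma_finite "\<lambda>_::'i. lborel :: real measure" by standard
  interpret PI: sigma_finite_measure "PiM I (\<lambda>_. lborel :: real measure)"
    using assms(1) by (rule sigma_finite)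
  have "(\<lambda>p. (snd p)(i := fst p))
      \<in> measurable (lborel \<Otimes>\<^sub>M PiM I (\<lambda>_. lborel)) (PiM (insert i I) (\<lambda>_. lborel :: real measure))"
    by (rule measurable_fun_upd[where J=I]) auto
  from measurable_comp[OF this assms(2)]
  have "(\<lambda>(y, x). K (x(i := y))) \<in> borel_measurable (lborel \<Otimes>\<^sub>M PiM I (\<lambda>_. lborel))"
    by (simp add: comp_def case_prod_beta')
  hence "(\<lambda>y. \<integral>\<^sup>+x. K (x(i := y)) \<partial>PiM I (\<lambda>_. lborel)) \<in> borel_measurable lborel"
    by (rule PI.borel_measurable_nn_integral)
  thus ?thesis by simp
qed

text \<open>Induction on the number of coordinates: Fubini splits off one coordinate, the induction
  hypothesis applies to the sections, and the real-line inequality to the section integrals.\<close>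
lemma prekopa_leindler_PiM:
  fixes F G H :: "('i \<Rightarrow> real) \<Rightarrow> ennreal"
  assumes "finite I" and l: "0 < l" "l < 1"
    and "F \<in> borel_measurable (PiM I (\<lambda>_. lborel))" "G \<in> borel_measurable (PiM I (\<lambda>_. lborel))"
      "H \<in> borel_measurable (PiM I (\<lambda>_. lborel))"
    and "\<And>x y a b. 0 \<le> a \<Longrightarrow> 0 \<le> b \<Longrightarrow> ennreal a \<le> F x \<Longrightarrow> ennreal b \<le> G y
      \<Longrightarrow> ennreal (a powr l * b powr (1 - l)) \<le> H (\<lambda>j. l * x j + (1 - l) * y j)"
    and "0 \<le> a" "0 \<le> b" "ennreal a \<le> integral\<^sup>N (PiM I (\<lambda>_. lborel)) F"
      "ennreal b \<le> integral\<^sup>N (PiM I (\<lambda>_. lborel)) G"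
  shows "ennreal (a powr l * b powr (1 - l)) \<le> integral\<^sup>N (PiM I (\<lambda>_. lborel)) H"
  using assms(1,4-)
proof (induction I arbitrary: F G H a b rule: finite_induct)
  case empty
  let ?u = "(\<lambda>_. undefined) :: 'i \<Rightarrow> real"
  have int: "integral\<^sup>N (PiM {} (\<lambda>_. lborel :: real measure)) K = K ?u" for K
    by (simp add: PiM_empty nn_integral_count_space_finite)
  have "(\<lambda>j. l * ?u j + (1 - l) * ?u j) = ?u" by (auto simp: algebra_simps)
  thus ?case using empty.prems(4)[of a b ?u ?u] empty.prems(5-8) by (simp add: int)
next
  case (insert i I)
  interpret product_sigma_finite "\<lambda>_::'i. lborel :: real measure" by standard
  define F' where "F' y = (\<integral>\<^sup>+x. F (x(i := y)) \<partial>PiM I (\<lambda>_. lborel))" for y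
  define G' where "G' y = (\<integral>\<^sup>+x. G (x(i := y)) \<partial>PiM I (\<lambda>_. lborel))" for y
  define H' where "H' y = (\<integral>\<^sup>+x. H (x(i := y)) \<partial>PiM I (\<lambda>_. lborel))" for y
  have Fubini: "integral\<^sup>N (PiM (insert i I) (\<lambda>_. lborel)) K = (\<integral>\<^sup>+y. (\<integral>\<^sup>+x. K (x(i := y)) \<partial>PiM I (\<lambda>_. lborel)) \<partial>lborel)"
    if "K \<in> borel_measurable (PiM (insert i I) (\<lambda>_. lborel :: real measure))" for K
    using insert.hyps that by (intro product_nn_integral_insert_rev) auto
  have sections: "ennreal (a' powr l * b' powr (1 - l)) \<le> H' (l * y1 + (1 - l) * y2)"
    if "0 \<le> a'" "0 \<le> b'" "ennreal a' \<le> F' y1" "ennreal b' \<le> G' y2" for y1 y2 a' b'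
    unfolding H'_def
  proof (rule insert.IH)
    show "(\<lambda>x. F (x(i := y1))) \<in> borel_measurable (PiM I (\<lambda>_. lborel))"
      "(\<lambda>x. G (x(i := y2))) \<in> borel_measurable (PiM I (\<lambda>_. lborel))"
      "(\<lambda>x. H (x(i := l * y1 + (1 - l) * y2))) \<in> borel_measurable (PiM I (\<lambda>_. lborel))"
      using insert.prems(1-3) by (auto intro!: measurable_PiM_fun_upd_section simp del: fun_upd_apply)
    fix x y a b assume "0 \<le> a" "0 \<le> b" "ennreal a \<le> F (x(i := y1))" "ennreal b \<le> G (y(i := y2))"
    from insert.prems(4)[OF this]
    show "ennreal (a powr l * b powr (1 - l)) \<le> H ((\<lambda>j. l * x j + (1 - l) * y j)(i := l * y1 + (1 - l) * y2))"
      by (simp add: fun_upd_def if_distrib cong: if_cong)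
  qed (use that in \<open>simp_all add: F'_def G'_def fun_upd_def\<close>)
  have "integral\<^sup>N (PiM (insert i I) (\<lambda>_. lborel)) F = (\<integral>\<^sup>+y. F' y \<partial>lborel)"
    "integral\<^sup>N (PiM (insert i I) (\<lambda>_. lborel)) G = (\<integral>\<^sup>+y. G' y \<partial>lborel)"
    "integral\<^sup>N (PiM (insert i I) (\<lambda>_. lborel)) H = (\<integral>\<^sup>+y. H' y \<partial>lborel)"
    unfolding F'_def G'_def H'_def using insert.prems(1-3) by (simp_all only: Fubini)
  moreover have "F' \<in> borel_measurable borel" "G' \<in> borel_measurable borel" "H' \<in> borel_measurable borel"
    unfolding F'_def G'_def H'_def using insert.hyps(1) insert.prems(1-3)
    by (auto intro: measurable_PiM_nn_integral_section)
  ultimately show ?case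
    using prekopa_leindler_real[of F' G' H', OF _ _ _ l sections] insert.prems(5-8) by simp
qed

lemma prekopa_leindler:
  fixes F G H :: "'a::euclidean_space \<Rightarrow> ennreal"
  assumes [measurable]: "F \<in> borel_measurable borel" "G \<in> borel_measurable borel"
      "H \<in> borel_measurable borel"
    and l: "0 < l" "l < 1"
    and hyp: "\<And>x y a b. 0 \<le> a \<Longrightarrow> 0 \<le> b \<Longrightarrow> ennreal a \<le> F x \<Longrightarrow> ennreal b \<le> G y
      \<Longrightarrow> ennreal (a powr l * b powr (1 - l)) \<le> H (l *\<^sub>R x + (1 - l) *\<^sub>R y)"
    and ab: "0 \<le> a" "0 \<le> b" "ennreal a \<le> (\<integral>\<^sup>+x. F x \<partial>lborel)" "ennreal b \<le> (\<integral>\<^sup>+x. G x \<partial>lborel)"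
  shows "ennreal (a powr l * b powr (1 - l)) \<le> (\<integral>\<^sup>+x. H x \<partial>lborel)"
proof -
  define \<phi> :: "('a \<Rightarrow> real) \<Rightarrow> 'a" where "\<phi> x = (\<Sum>b\<in>Basis. x b *\<^sub>R b)" for x
  have [measurable]: "\<phi> \<in> measurable (PiM Basis (\<lambda>_. lborel)) borel"
    unfolding \<phi>_def by measurable
  have coordinates: "integral\<^sup>N lborel K = integral\<^sup>N (PiM Basis (\<lambda>_. lborel)) (\<lambda>x. K (\<phi> x))"
    if [measurable]: "K \<in> borel_measurable borel" for K :: "'a \<Rightarrow> ennreal"
  proof -
    have "integral\<^sup>N (lborel :: 'a measure) K = integral\<^sup>N (distr (PiM Basis (\<lambda>_. lborel)) borel \<phi>) K"
      unfolding \<phi>_def by (subst lborel_eq) (rule refl)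
    also have "\<dots> = integral\<^sup>N (PiM Basis (\<lambda>_. lborel)) (\<lambda>x. K (\<phi> x))"
      by (rule nn_integral_distr) measurable
    finally show ?thesis .
  qed
  have "\<phi> (\<lambda>j. l * x j + (1 - l) * y j) = l *\<^sub>R \<phi> x + (1 - l) *\<^sub>R \<phi> y" for x y
    unfolding \<phi>_def by (simp add: scaleR_sum_right sum.distrib[symmetric] scaleR_add_left)
  with hyp have "ennreal (a powr l * b powr (1 - l)) \<le> H (\<phi> (\<lambda>j. l * x j + (1 - l) * y j))"
    if "0 \<le> a" "0 \<le> b" "ennreal a \<le> F (\<phi> x)" "ennreal b \<le> G (\<phi> y)" for x y a b
    using that by simp
  with ab show ?thesis
    unfolding coordinates[OF assms(1)] coordinates[OF assms(2)] coordinates[OF assms(3)]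
    by (intro prekopa_leindler_PiM[OF finite_Basis l]) auto
qed

section \<open>Brunn--Minkowski for convex sets\<close>

lemma
  fixes S :: "'a::euclidean_space set"
  assumes "convex S"
  shows sets_lebesgue_convex: "S \<in> sets lebesgue"
    and emeasure_interior_convex: "emeasure lebesgue (interior S) = emeasure lebesgue S"
    and emeasure_closure_convex: "emeasure lebesgue (closure S) = emeasure lebesgue S"
proof -
  have frontier: "frontier S \<in> null_sets lebesgue"
    using negligible_convex_frontier[OF assms] negligible_iff_null_sets by blast
  have "S - interior S \<in> null_sets lebesgue"
    using negligible_subset[OF negligible_convex_frontier[OF assms], of "S - interior S"]
    by (auto simp: negligible_iff_null_sets frontier_def dest: subsetD[OF closure_subset])
  moreover have interior: "interior S \<in> sets lebesgue" by (simp add: borel_open)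
  moreover have S: "S = interior S \<union> (S - interior S)" using interior_subset by blast
  ultimately show "S \<in> sets lebesgue"
    and int: "emeasure lebesgue (interior S) = emeasure lebesgue S"
    by (metis null_setsD2 sets.Un, metis emeasure_Un_null_set)
  have "closure S = interior S \<union> frontier S"
    unfolding frontier_def using interior_subset closure_subset by blast
  with emeasure_Un_null_set[OF interior frontier] int
  show "emeasure lebesgue (closure S) = emeasure lebesgue S" by simp
qed

text \<open>Prekopa--Leindler for the indicators of \<open>interior A\<close>, \<open>interior B\<close> and \<open>closure C\<close>, which carry
  the same measures as \<open>A\<close>, \<open>B\<close>, \<open>C\<close>.\<close>
lemma brunn_minkowski_multiplicative:
  fixes A B C :: "'a::euclidean_space set"
  assumes cvx: "convex A" "convex B" "convex C" and l: "0 < l" "l < 1"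
    and sub: "\<And>x y. x \<in> A \<Longrightarrow> y \<in> B \<Longrightarrow> l *\<^sub>R x + (1 - l) *\<^sub>R y \<in> C"
    and ab: "0 \<le> a" "0 \<le> b" "ennreal a \<le> emeasure lebesgue A" "ennreal b \<le> emeasure lebesgue B"
  shows "ennreal (a powr l * b powr (1 - l)) \<le> emeasure lebesgue C"
proof -
  define F where "F = (indicator (interior A) :: 'a \<Rightarrow> ennreal)"
  define G where "G = (indicator (interior B) :: 'a \<Rightarrow> ennreal)"
  define H where "H = (indicator (closure C) :: 'a \<Rightarrow> ennreal)"
  have [measurable]: "F \<in> borel_measurable borel" "G \<in> borel_measurable borel" "H \<in> borel_measurable borel"
    unfolding F_def G_def H_def by (auto intro!: borel_measurable_indicator borel_open borel_closed)
  have integrals: "(\<integral>\<^sup>+x. F x \<partial>lborel) = emeasure lebesgue A"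
    "(\<integral>\<^sup>+x. G x \<partial>lborel) = emeasure lebesgue B" "(\<integral>\<^sup>+x. H x \<partial>lborel) = emeasure lebesgue C"
    unfolding F_def G_def H_def
    using emeasure_interior_convex[OF cvx(1)] emeasure_interior_convex[OF cvx(2)]
      emeasure_closure_convex[OF cvx(3)]
    by (simp_all add: borel_open borel_closed)
  have "ennreal (a' powr l * b' powr (1 - l)) \<le> H (l *\<^sub>R x + (1 - l) *\<^sub>R y)"
    if h: "0 \<le> a'" "0 \<le> b'" "ennreal a' \<le> F x" "ennreal b' \<le> G y" for x y a' b'
  proof (cases "a' = 0 \<or> b' = 0")
    case False
    with h have "x \<in> interior A" "y \<in> interior B" "a' \<le> 1" "b' \<le> 1"
      by (auto simp: F_def G_def indicator_def of_bool_def split: if_splits)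
    moreover from this have "l *\<^sub>R x + (1 - l) *\<^sub>R y \<in> closure C"
      using sub interior_subset closure_subset by blast
    ultimately show ?thesis
      using h l by (simp add: H_def mult_le_one powr_le1)
  qed auto
  from prekopa_leindler[of F G H, OF _ _ _ l this] ab show ?thesis
    unfolding integrals by simp
qed

lemma pow_powr_inverse:
  assumes "0 \<le> (x::real)" "0 < n"
  shows "(x ^ n) powr (1 / real n) = x"
  using assms by (cases "x = 0") (simp_all add: powr_realpow[symmetric] powr_powr)

lemma powr_inverse_pow:
  assumes "0 \<le> (x::real)" "0 < n"
  shows "(x powr (1 / real n)) ^ n = x"
  using assms by (cases "x = 0") (simp_all add: powr_realpow[symmetric] powr_powr)

lemma emeasure_lebesgue_scaleR_image:
  fixes S :: "'a::euclidean_space set"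
  shows "emeasure lebesgue ((*\<^sub>R) c ` S) = ennreal (\<bar>c\<bar> ^ DIM('a)) * emeasure lebesgue S"
  using emeasure_lebesgue_affine[of c 0 S] by (simp add: ennreal_power)

lemma emeasure_lebesgue_eq_measure:
  "0 < measure lebesgue S \<Longrightarrow> emeasure lebesgue S = ennreal (measure lebesgue S)"
  by (rule emeasure_eq_ennreal_measure) (auto simp: measure_def)

lemma emeasure_rescale_to_unit:
  fixes S :: "'a::euclidean_space set"
  assumes "0 < measure lebesgue S"
  shows "emeasure lebesgue ((*\<^sub>R) (1 / measure lebesgue S powr (1 / DIM('a))) ` S) = 1"
proof -
  define \<alpha> where "\<alpha> = measure lebesgue S powr (1 / DIM('a))"
  have "0 < \<alpha>" "\<alpha> ^ DIM('a) = measure lebesgue S"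
    using assms by (simp_all add: \<alpha>_def powr_inverse_pow)
  hence "\<bar>1 / \<alpha>\<bar> ^ DIM('a) * measure lebesgue S = 1"
    using assms by (simp add: power_one_over)
  thus ?thesis
    unfolding \<alpha>_def[symmetric] emeasure_lebesgue_scaleR_image emeasure_lebesgue_eq_measure[OF assms]
    by (simp add: ennreal_mult[symmetric])
qed

lemma brunn_minkowski_convex_degenerate:
  fixes A B C :: "'a::euclidean_space set"
  assumes cvx: "convex B" "convex C" and a0: "a0 \<in> A" and l: "0 < l" "l < 1"
    and sub: "\<And>x y. x \<in> A \<Longrightarrow> y \<in> B \<Longrightarrow> l *\<^sub>R x + (1 - l) *\<^sub>R y \<in> C"
    and fin: "emeasure lebesgue C < \<infinity>"
  shows "(1 - l) * measure lebesgue B powr (1 / DIM('a)) \<le> measure lebesgue C powr (1 / DIM('a))"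
proof -
  define X where "X = (\<lambda>y. (1 - l) *\<^sub>R y + l *\<^sub>R a0) ` B"
  have "X \<subseteq> C" unfolding X_def using sub a0 by (auto simp: add.commute)
  have "(\<lambda>y. (1 - l) *\<^sub>R y + l *\<^sub>R a0) = (\<lambda>y. l *\<^sub>R a0 + (1 - l) *\<^sub>R y)"
    by (auto simp: add.commute)
  hence "convex X" unfolding X_def by (metis convex_affinity[OF cvx(1)])
  have "measure lebesgue X \<le> measure lebesgue C"
    using \<open>X \<subseteq> C\<close> sets_lebesgue_convex[OF \<open>convex X\<close>] sets_lebesgue_convex[OF cvx(2)] fin
    by (intro measure_mono_fmeasurable) (auto simp: fmeasurable_def)
  moreover have "measure lebesgue X = (1 - l) ^ DIM('a) * measure lebesgue B"
    unfolding X_def using measure_lebesgue_affine[of "1 - l" "l *\<^sub>R a0" B] l by simp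
  ultimately have "(1 - l) ^ DIM('a) * measure lebesgue B \<le> measure lebesgue C" by simp
  hence "((1 - l) ^ DIM('a) * measure lebesgue B) powr (1 / DIM('a)) \<le> measure lebesgue C powr (1 / DIM('a))"
    using l by (intro powr_mono2) auto
  thus ?thesis using l by (simp add: powr_mult pow_powr_inverse)
qed

text \<open>Rescale \<open>A\<close>, \<open>B\<close>, \<open>C\<close> by \<open>1/\<alpha>\<close>, \<open>1/\<beta>\<close>, \<open>1/(l \<alpha> + (1 - l) \<beta>)\<close>, where \<open>\<alpha>\<^sup>n = |A|\<close> and \<open>\<beta>\<^sup>n = |B|\<close>: the
  rescaled sets satisfy the hypothesis with weight \<open>\<mu> = l \<alpha> / (l \<alpha> + (1 - l) \<beta>)\<close> and \<open>A\<close>, \<open>B\<close> get unit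
  volume, so the multiplicative inequality gives volume at least \<open>1\<close> for the rescaled \<open>C\<close>.\<close>
lemma brunn_minkowski_convex_nondegenerate:
  fixes A B C :: "'a::euclidean_space set"
  assumes cvx: "convex A" "convex B" "convex C" and l: "0 < l" "l < 1"
    and pos: "0 < measure lebesgue A" "0 < measure lebesgue B"
    and sub: "\<And>x y. x \<in> A \<Longrightarrow> y \<in> B \<Longrightarrow> l *\<^sub>R x + (1 - l) *\<^sub>R y \<in> C"
    and fin: "emeasure lebesgue C < \<infinity>"
  shows "l * measure lebesgue A powr (1 / DIM('a)) + (1 - l) * measure lebesgue B powr (1 / DIM('a))
          \<le> measure lebesgue C powr (1 / DIM('a))"
proof -
  define \<alpha> where "\<alpha> = measure lebesgue A powr (1 / DIM('a))"
  define \<beta> where "\<beta> = measure lebesgue B powr (1 / DIM('a))"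
  define s where "s = l * \<alpha> + (1 - l) * \<beta>"
  define \<mu> where "\<mu> = l * \<alpha> / s"
  have \<alpha>: "0 < \<alpha>" and \<beta>: "0 < \<beta>" using pos by (simp_all add: \<alpha>_def \<beta>_def)
  have terms: "0 < l * \<alpha>" "0 < (1 - l) * \<beta>" using l \<alpha> \<beta> by simp_all
  hence s: "0 < s" and \<mu>: "0 < \<mu>" "\<mu> < 1"
    by (simp_all add: s_def \<mu>_def)
  have "1 - \<mu> = (1 - l) * \<beta> / s" using s by (simp add: \<mu>_def s_def field_simps)
  hence coeffs: "\<mu> / \<alpha> = l / s" "(1 - \<mu>) / \<beta> = (1 - l) / s"
    using \<alpha> \<beta> by (simp_all add: \<mu>_def)
  have "\<mu> *\<^sub>R x + (1 - \<mu>) *\<^sub>R y \<in> (*\<^sub>R) (1 / s) ` C"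
    if xy: "x \<in> (*\<^sub>R) (1 / \<alpha>) ` A" "y \<in> (*\<^sub>R) (1 / \<beta>) ` B" for x y
  proof -
    obtain x0 y0 where xy: "x0 \<in> A" "y0 \<in> B" "x = (1 / \<alpha>) *\<^sub>R x0" "y = (1 / \<beta>) *\<^sub>R y0"
      using xy by blast
    hence "\<mu> *\<^sub>R x + (1 - \<mu>) *\<^sub>R y = (1 / s) *\<^sub>R (l *\<^sub>R x0 + (1 - l) *\<^sub>R y0)"
      by (simp add: coeffs scaleR_add_right)
    thus ?thesis using sub[OF xy(1,2)] by blast
  qed
  hence "ennreal (1 powr \<mu> * 1 powr (1 - \<mu>)) \<le> emeasure lebesgue ((*\<^sub>R) (1 / s) ` C)"
    by (intro brunn_minkowski_multiplicative[of "(*\<^sub>R) (1 / \<alpha>) ` A" "(*\<^sub>R) (1 / \<beta>) ` B", OF _ _ _ \<mu>])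
      (use cvx pos in \<open>simp_all add: convex_scaling emeasure_rescale_to_unit \<alpha>_def \<beta>_def\<close>)
  also have "\<dots> = ennreal ((1 / s) ^ DIM('a) * measure lebesgue C)"
    using s fin
    by (simp add: emeasure_lebesgue_scaleR_image emeasure_eq_ennreal_measure ennreal_mult[symmetric])
  finally have "1 \<le> (1 / s) ^ DIM('a) * measure lebesgue C"
    by (simp add: ennreal_le_iff2)
  hence "s ^ DIM('a) \<le> measure lebesgue C"
    using s by (simp add: ennreal_le_iff2 field_simps power_divide)
  hence "(s ^ DIM('a)) powr (1 / DIM('a)) \<le> measure lebesgue C powr (1 / DIM('a))"
    using s by (intro powr_mono2) auto
  thus ?thesis using s by (simp add: s_def \<alpha>_def \<beta>_def pow_powr_inverse)
qed

lemma brunn_minkowski_convex: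
  fixes A B C :: "'a::euclidean_space set"
  assumes cvx: "convex A" "convex B" "convex C" and ne: "A \<noteq> {}" "B \<noteq> {}" and l: "0 < l" "l < 1"
    and sub: "\<And>x y. x \<in> A \<Longrightarrow> y \<in> B \<Longrightarrow> l *\<^sub>R x + (1 - l) *\<^sub>R y \<in> C"
    and fin: "emeasure lebesgue C < \<infinity>"
  shows "l * measure lebesgue A powr (1 / DIM('a)) + (1 - l) * measure lebesgue B powr (1 / DIM('a))
          \<le> measure lebesgue C powr (1 / DIM('a))"
proof -
  obtain a0 b0 where "a0 \<in> A" "b0 \<in> B" using ne by blast
  consider "measure lebesgue A = 0" | "measure lebesgue B = 0"
    | "0 < measure lebesgue A" "0 < measure lebesgue B"
    using measure_nonneg[of lebesgue A] measure_nonneg[of lebesgue B] by argo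
  then show ?thesis
  proof cases
    case 1
    thus ?thesis using brunn_minkowski_convex_degenerate[OF cvx(2,3) \<open>a0 \<in> A\<close> l sub fin] by simp
  next
    case 2
    have "(1 - (1 - l)) * measure lebesgue A powr (1 / DIM('a)) \<le> measure lebesgue C powr (1 / DIM('a))"
      using l sub \<open>b0 \<in> B\<close> by (intro brunn_minkowski_convex_degenerate[OF cvx(1,3) _ _ _ _ fin])
        (auto simp: add.commute)
    thus ?thesis using 2 by simp
  next
    case 3
    thus ?thesis by (rule brunn_minkowski_convex_nondegenerate[OF cvx l _ _ sub fin])
  qed
qed

section \<open>Integrable log-concave functions\<close>

lemma nn_integral_ge_const_on:
  assumes "E \<in> sets M" "\<And>x. x \<in> E \<Longrightarrow> c \<le> f x"
  shows "ennreal c * emeasure M E \<le> (\<integral>\<^sup>+x. ennreal (f x) \<partial>M)"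
proof -
  have "ennreal c * emeasure M E = (\<integral>\<^sup>+x. ennreal c * indicator E x \<partial>M)"
    using assms(1) by (simp add: nn_integral_cmult_indicator)
  also have "\<dots> \<le> (\<integral>\<^sup>+x. ennreal (f x) \<partial>M)"
    using assms(2) by (intro nn_integral_mono) (auto simp: indicator_def intro: ennreal_leI)
  finally show ?thesis .
qed

locale integrable_log_concave =
  fixes f :: "'a::euclidean_space \<Rightarrow> real"
  assumes integrable: "integrable lborel f" and log_concave: "log_concave f"
    and interior_supp: "interior (supp f) \<noteq> {}"
begin

lemma nonneg: "0 \<le> f x"
  using log_concave unfolding log_concave_def by auto

lemma log_concave_ineq:
  "0 \<le> l \<Longrightarrow> l \<le> 1 \<Longrightarrow> f x powr (1 - l) * f y powr l \<le> f ((1 - l) *\<^sub>R x + l *\<^sub>R y)"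
  using log_concave unfolding log_concave_def by auto

lemma borel_measurable_f [measurable]: "f \<in> borel_measurable borel"
  using borel_measurable_integrable[OF integrable] by simp

lemma convex_supp: "convex (supp f)"
  unfolding convex_alt
proof (intro ballI allI impI)
  fix x y :: 'a and u :: real
  assume "x \<in> supp f" "y \<in> supp f" "0 \<le> u \<and> u \<le> 1"
  hence "0 < f x powr (1 - u) * f y powr u" by (simp add: supp_def)
  also have "\<dots> \<le> f ((1 - u) *\<^sub>R x + u *\<^sub>R y)" using \<open>0 \<le> u \<and> u \<le> 1\<close> by (simp add: log_concave_ineq)
  finally show "(1 - u) *\<^sub>R x + u *\<^sub>R y \<in> supp f" by (simp add: supp_def)
qed

lemma nn_integral_eq: "(\<integral>\<^sup>+x. ennreal (f x) \<partial>lborel) = ennreal (integral\<^sup>L lborel f)"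
  using nn_integral_eq_integral[OF integrable] nonneg by simp

lemma emeasure_superlevel_finite:
  assumes "0 < s"
  shows "emeasure lborel {x. s \<le> f x} < \<infinity>"
proof -
  have "ennreal s * emeasure lborel {x. s \<le> f x} \<le> ennreal (integral\<^sup>L lborel f)"
    unfolding nn_integral_eq[symmetric] by (rule nn_integral_ge_const_on) auto
  also have "\<dots> < \<infinity>" by simp
  finally show ?thesis using assms by (auto simp: ennreal_mult_less_top)
qed

lemma superlevel_positive_measure: "\<exists>\<delta>>0. 0 < emeasure lborel {x. \<delta> \<le> f x}"
proof -
  define D where "D k = {x. 1 / real (Suc k) \<le> f x}" for k
  have "(SUP k. emeasure lborel (D k)) = emeasure lborel (\<Union>k. D k)"
  proof (rule SUP_emeasure_incseq)
    show "incseq D" unfolding incseq_def D_def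
      by (auto intro: order.trans[rotated] simp: frac_le)
  qed (auto simp: D_def)
  moreover have "(\<Union>k. D k) = supp f"
  proof
    show "(\<Union>k. D k) \<subseteq> supp f" unfolding D_def supp_def
      by (auto intro: less_le_trans[rotated])
    show "supp f \<subseteq> (\<Union>k. D k)"
    proof
      fix x assume "x \<in> supp f"
      then obtain k where "1 / real (Suc k) < f x" using nat_approx_posE by (auto simp: supp_def)
      thus "x \<in> (\<Union>k. D k)" unfolding D_def by (auto intro!: exI[of _ k])
    qed
  qed
  moreover have "0 < emeasure lborel (supp f)"
  proof -
    have "interior (supp f) \<notin> null_sets lebesgue"
      using open_not_negligible[OF open_interior interior_supp] by (simp add: negligible_iff_null_sets)
    hence "0 < emeasure lebesgue (interior (supp f))"
      by (simp add: null_sets_def borel_open zero_less_iff_neq_zero)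
    also have "\<dots> \<le> emeasure lebesgue (supp f)"
      by (intro emeasure_mono interior_subset) (auto simp: supp_def)
    finally show ?thesis by (simp add: supp_def)
  qed
  ultimately have "0 < (SUP k. emeasure lborel (D k))" by simp
  then obtain k where "0 < emeasure lborel (D k)" by (auto simp: less_SUP_iff)
  thus ?thesis unfolding D_def by (intro exI[of _ "1 / real (Suc k)"]) auto
qed

lemma fmeasurable_superlevel: "0 < s \<Longrightarrow> {x. s \<le> f x} \<in> fmeasurable lebesgue"
  using emeasure_superlevel_finite[of s] by (simp add: fmeasurable_def)

lemma sqrt_mult_le_midpoint: "sqrt (f x * f y) \<le> f ((1 / 2) *\<^sub>R y + (1 / 2) *\<^sub>R x)"
  using log_concave_ineq[of "1 / 2" x y] nonneg[of x] nonneg[of y]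
  by (simp add: powr_half_sqrt real_sqrt_mult add.commute)

text \<open>If \<open>f\<close> is at least \<open>\<delta>\<close> on a set \<open>D\<close> of positive measure, then by log-concavity it is at least
  \<open>\<surd>(f x \<delta>)\<close> on the homothetic copy \<open>(D + x) / 2\<close>, whose measure does not depend on \<open>x\<close>; integrability
  therefore bounds \<open>f x\<close>.\<close>
lemma bounded_above: "\<exists>K. \<forall>x. f x \<le> K"
proof -
  obtain \<delta> where \<delta>: "0 < \<delta>" "0 < emeasure lborel {x. \<delta> \<le> f x}"
    using superlevel_positive_measure by blast
  define D where "D = {x. \<delta> \<le> f x}"
  define m where "m = measure lborel D"
  have D: "D \<in> sets borel" "emeasure lborel D = ennreal m"
    unfolding D_def m_def using emeasure_superlevel_finite[OF \<delta>(1)]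
    by (auto intro: emeasure_eq_ennreal_measure)
  hence m: "0 < m" using \<delta>(2) unfolding D_def by simp
  define I where "I = integral\<^sup>L lborel f"
  define c where "c = (1 / 2) ^ DIM('a) * m"
  have c: "0 < c" using m by (simp add: c_def)
  have bound: "sqrt (f x * \<delta>) * c \<le> I" for x
  proof -
    define E where "E = (\<lambda>y. (1 / 2) *\<^sub>R y + (1 / 2) *\<^sub>R x) ` D"
    have E_eq: "E = (\<lambda>e. 2 *\<^sub>R e - x) -` D"
      unfolding E_def
      by (auto simp: image_iff scaleR_add_right algebra_simps intro!: bexI[of _ "2 *\<^sub>R e - x" for e])
    have "(\<lambda>e. 2 *\<^sub>R e - x) \<in> borel_measurable borel"
      by (intro borel_measurable_continuous_onI continuous_intros)
    from measurable_sets[OF this D(1)] have E: "E \<in> sets borel" unfolding E_eq by simp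
    have "emeasure lborel E = ennreal c"
      using emeasure_lebesgue_affine[of "1 / 2" "(1 / 2) *\<^sub>R x" D] E D m
      by (simp add: E_def c_def ennreal_mult ennreal_power)
    moreover have "sqrt (f x * \<delta>) \<le> f e" if e: "e \<in> E" for e
    proof -
      obtain y where y: "y \<in> D" "e = (1 / 2) *\<^sub>R y + (1 / 2) *\<^sub>R x" using e unfolding E_def by auto
      have "sqrt (f x * \<delta>) \<le> sqrt (f x * f y)"
        using y(1) nonneg[of x] by (simp add: D_def mult_left_mono)
      also have "\<dots> \<le> f e" unfolding y(2) by (rule sqrt_mult_le_midpoint)
      finally show ?thesis .
    qed
    ultimately have "ennreal (sqrt (f x * \<delta>)) * ennreal c \<le> ennreal I"
      using E nn_integral_ge_const_on[of E lborel "sqrt (f x * \<delta>)" f] by (simp add: I_def nn_integral_eq)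
    moreover have "0 \<le> I" unfolding I_def using nonneg by simp
    ultimately show ?thesis using c by (simp add: ennreal_mult''[symmetric] ennreal_le_iff)
  qed
  have "f x \<le> (I / c)\<^sup>2 / \<delta>" for x
  proof -
    have "sqrt (f x * \<delta>) \<le> I / c" using bound[of x] c by (simp add: pos_le_divide_eq)
    hence "(sqrt (f x * \<delta>))\<^sup>2 \<le> (I / c)\<^sup>2" using nonneg[of x] \<delta>(1) by (intro power_mono) auto
    thus ?thesis using nonneg[of x] \<delta>(1) by (simp add: pos_le_divide_eq)
  qed
  thus ?thesis by blast
qed

lemma bdd_above: "bdd_above (range f)"
  using bounded_above by (auto simp: bdd_above_def)

lemma le_sup_norm: "f x \<le> sup_norm f"
  unfolding sup_norm_def using bdd_above by (auto intro: cSUP_upper)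

lemma sup_norm_pos: "0 < sup_norm f"
proof -
  obtain x where "x \<in> supp f" using interior_supp interior_subset by blast
  thus ?thesis using le_sup_norm[of x] by (simp add: supp_def)
qed

lemma less_sup_norm_iff: "c < sup_norm f \<longleftrightarrow> (\<exists>x. c < f x)"
  unfolding sup_norm_def using bdd_above by (simp add: less_cSUP_iff)

end

section \<open>The sets \<open>A\<^sub>t(x)\<close> and their maximal volume\<close>

lemma cSUP_powr_le:
  fixes h :: "'b \<Rightarrow> real"
  assumes "S \<noteq> {}" "bdd_above (h ` S)" "\<And>x. x \<in> S \<Longrightarrow> 0 \<le> h x"
    and "\<And>x. x \<in> S \<Longrightarrow> h x powr p \<le> K" and "0 < p"
  shows "(SUP x\<in>S. h x) powr p \<le> K"
proof -
  obtain x0 where "x0 \<in> S" using assms(1) by blast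
  hence K: "0 \<le> K" using assms(4)[of x0] by (meson order.trans powr_ge_zero)
  have "h x \<le> K powr (1 / p)" if "x \<in> S" for x
  proof -
    have "h x = (h x powr p) powr (1 / p)" using assms(3,5) that by (simp add: powr_powr)
    also have "\<dots> \<le> K powr (1 / p)" using assms(4,5) that by (intro powr_mono2) auto
    finally show ?thesis .
  qed
  hence "(SUP x\<in>S. h x) \<le> K powr (1 / p)" using assms(1) by (intro cSUP_least) auto
  moreover have "0 \<le> (SUP x\<in>S. h x)"
    using assms(3)[OF \<open>x0 \<in> S\<close>] cSUP_upper[OF \<open>x0 \<in> S\<close> assms(2)] by linarith
  ultimately have "(SUP x\<in>S. h x) powr p \<le> (K powr (1 / p)) powr p"
    using assms(5) by (intro powr_mono2) auto
  also have "\<dots> = K" using K assms(5) by (simp add: powr_powr)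
  finally show ?thesis .
qed

lemma cSUP_powr_add_le:
  fixes h1 h2 :: "'b \<Rightarrow> real"
  assumes "S1 \<noteq> {}" "S2 \<noteq> {}" "bdd_above (h1 ` S1)" "bdd_above (h2 ` S2)"
    and "\<And>x. x \<in> S1 \<Longrightarrow> 0 \<le> h1 x" "\<And>y. y \<in> S2 \<Longrightarrow> 0 \<le> h2 y" and "0 < a" "0 < b" "0 < p"
    and bound: "\<And>x y. x \<in> S1 \<Longrightarrow> y \<in> S2 \<Longrightarrow> a * h1 x powr p + b * h2 y powr p \<le> R"
  shows "a * (SUP x\<in>S1. h1 x) powr p + b * (SUP y\<in>S2. h2 y) powr p \<le> R"
proof -
  have "(SUP x\<in>S1. h1 x) powr p \<le> (R - b * h2 y powr p) / a" if "y \<in> S2" for y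
    using assms bound[OF _ that] by (intro cSUP_powr_le) (auto simp: pos_le_divide_eq algebra_simps)
  hence "(SUP y\<in>S2. h2 y) powr p \<le> (R - a * (SUP x\<in>S1. h1 x) powr p) / b"
    using assms by (intro cSUP_powr_le) (auto simp: pos_le_divide_eq pos_divide_le_eq algebra_simps)
  thus ?thesis using assms(8) by (simp add: pos_le_divide_eq algebra_simps)
qed

locale log_concave_pair = F: integrable_log_concave f + G: integrable_log_concave g
  for f g :: "'a::euclidean_space \<Rightarrow> real"
begin

abbreviation supp_sum :: "'a set" where
  "supp_sum \<equiv> minkowski_sum (supp f) (supp g)"

lemma supp_sum_nonempty: "supp_sum \<noteq> {}"
  using F.interior_supp G.interior_supp interior_subset unfolding minkowski_sum_def by blast

lemma convex_supp_sum: "convex supp_sum"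
proof -
  have "supp_sum = (\<Union>x\<in>supp f. \<Union>y\<in>supp g. {x + y})" unfolding minkowski_sum_def by blast
  thus ?thesis using convex_sums[OF F.convex_supp G.convex_supp] by simp
qed

lemma At_set_eq:
  assumes "0 < t"
  shows "At_set f g t x = {z. t * sup_norm f * sup_norm g \<le> f z * g (x - z)}"
proof -
  have "0 < f z \<and> 0 < g (x - z)" if "t * sup_norm f * sup_norm g \<le> f z * g (x - z)" for z
  proof -
    have "0 < f z * g (x - z)"
      using that assms F.sup_norm_pos G.sup_norm_pos by (meson less_le_trans mult_pos_pos)
    thus ?thesis using F.nonneg[of z] G.nonneg[of "x - z"] by (simp add: zero_less_mult_iff)
  qed
  thus ?thesis unfolding At_set_def supp_def by force
qed

lemma product_log_concave_ineq:
  assumes l: "0 \<le> l" "l \<le> 1" and c: "0 < c1" "0 < c2"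
    and "c1 \<le> f z1 * g w1" "c2 \<le> f z2 * g w2"
  shows "c1 powr l * c2 powr (1 - l) \<le> f (l *\<^sub>R z1 + (1 - l) *\<^sub>R z2) * g (l *\<^sub>R w1 + (1 - l) *\<^sub>R w2)"
proof -
  have "c1 powr l * c2 powr (1 - l) \<le> (f z1 * g w1) powr l * (f z2 * g w2) powr (1 - l)"
    using assms by (intro mult_mono powr_mono2) auto
  also have "\<dots> = (f z2 powr (1 - l) * f z1 powr l) * (g w2 powr (1 - l) * g w1 powr l)"
    by (simp add: powr_mult F.nonneg G.nonneg)
  also have "\<dots> \<le> f (l *\<^sub>R z1 + (1 - l) *\<^sub>R z2) * g (l *\<^sub>R w1 + (1 - l) *\<^sub>R w2)"
    using F.log_concave_ineq[OF l, of z2 z1] G.log_concave_ineq[OF l, of w2 w1]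
    by (intro mult_mono) (auto simp: F.nonneg G.nonneg add.commute)
  finally show ?thesis .
qed

lemma At_set_convex_combination:
  assumes t: "0 < t1" "0 < t2" and l: "0 \<le> l" "l \<le> 1"
    and z1: "z1 \<in> At_set f g t1 x1" and z2: "z2 \<in> At_set f g t2 x2"
  shows "l *\<^sub>R z1 + (1 - l) *\<^sub>R z2 \<in> At_set f g (t1 powr l * t2 powr (1 - l)) (l *\<^sub>R x1 + (1 - l) *\<^sub>R x2)"
proof -
  let ?S = "sup_norm f * sup_norm g"
  have S: "0 < ?S" using F.sup_norm_pos G.sup_norm_pos by simp
  have "(t1 * ?S) powr l * (t2 * ?S) powr (1 - l)
      \<le> f (l *\<^sub>R z1 + (1 - l) *\<^sub>R z2) * g (l *\<^sub>R (x1 - z1) + (1 - l) *\<^sub>R (x2 - z2))"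
    using z1 z2 t S by (intro product_log_concave_ineq[OF l]) (auto simp: At_set_eq mult.assoc)
  moreover have "(t1 * ?S) powr l * (t2 * ?S) powr (1 - l) = (t1 powr l * t2 powr (1 - l)) * ?S"
  proof -
    have "(t1 * ?S) powr l * (t2 * ?S) powr (1 - l) = (t1 powr l * t2 powr (1 - l)) * (?S powr l * ?S powr (1 - l))"
      using t S by (simp add: powr_mult mult_ac)
    also have "?S powr l * ?S powr (1 - l) = ?S" using S by (simp add: powr_add[symmetric])
    finally show ?thesis .
  qed
  moreover have "l *\<^sub>R (x1 - z1) + (1 - l) *\<^sub>R (x2 - z2)
      = (l *\<^sub>R x1 + (1 - l) *\<^sub>R x2) - (l *\<^sub>R z1 + (1 - l) *\<^sub>R z2)"
    by (simp add: algebra_simps)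
  ultimately show ?thesis using t by (simp add: At_set_eq mult.assoc)
qed

lemma convex_At_set:
  assumes "0 < t"
  shows "convex (At_set f g t x)"
  unfolding convex_alt
proof (intro ballI allI impI)
  fix z1 z2 and u :: real assume "z1 \<in> At_set f g t x" "z2 \<in> At_set f g t x" "0 \<le> u \<and> u \<le> 1"
  from At_set_convex_combination[OF assms assms _ _ this(1,2), of "1 - u"] this(3)
  have "(1 - u) *\<^sub>R z1 + (1 - (1 - u)) *\<^sub>R z2
      \<in> At_set f g (t powr (1 - u) * t powr (1 - (1 - u))) ((1 - u) *\<^sub>R x + (1 - (1 - u)) *\<^sub>R x)"
    by simp
  moreover have "t powr (1 - u) * t powr (1 - (1 - u)) = t" using assms by (simp add: powr_add[symmetric])
  moreover have "(1 - u) *\<^sub>R x + (1 - (1 - u)) *\<^sub>R x = x" by (simp add: scaleR_add_left[symmetric])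
  ultimately show "(1 - u) *\<^sub>R z1 + u *\<^sub>R z2 \<in> At_set f g t x" by simp
qed

lemma At_set_subset_superlevel: "0 < t \<Longrightarrow> At_set f g t x \<subseteq> {z. t * sup_norm f \<le> f z}"
proof
  fix z assume "0 < t" "z \<in> At_set f g t x"
  hence "t * sup_norm f * sup_norm g \<le> f z * g (x - z)" by (simp add: At_set_eq)
  also have "\<dots> \<le> f z * sup_norm g" using G.le_sup_norm F.nonneg by (intro mult_left_mono) auto
  finally show "z \<in> {z. t * sup_norm f \<le> f z}" using G.sup_norm_pos by simp
qed

lemma fmeasurable_At_set:
  assumes "0 < t"
  shows "At_set f g t x \<in> fmeasurable lebesgue"
proof (rule fmeasurableI2)
  show "{z. t * sup_norm f \<le> f z} \<in> fmeasurable lebesgue"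
    using assms F.sup_norm_pos by (intro F.fmeasurable_superlevel) simp
  show "At_set f g t x \<subseteq> {z. t * sup_norm f \<le> f z}" by (rule At_set_subset_superlevel[OF assms])
  show "At_set f g t x \<in> sets lebesgue" by (rule sets_lebesgue_convex[OF convex_At_set[OF assms]])
qed

lemma bdd_above_measure_At_set:
  assumes "0 < t"
  shows "bdd_above ((\<lambda>x. measure lebesgue (At_set f g t x)) ` supp_sum)"
proof -
  have "measure lebesgue (At_set f g t x) \<le> measure lebesgue {z. t * sup_norm f \<le> f z}" for x
    by (rule measure_mono_fmeasurable[OF At_set_subset_superlevel[OF assms]])
      (use assms F.sup_norm_pos fmeasurable_At_set[OF assms] in \<open>simp_all add: F.fmeasurable_superlevel\<close>)
  thus ?thesis by (auto simp: bdd_above_def)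
qed

lemma measure_At_set_le_M_t: "0 < t \<Longrightarrow> x \<in> supp_sum \<Longrightarrow> measure lebesgue (At_set f g t x) \<le> M_t f g t"
  unfolding M_t_def by (rule cSUP_upper[OF _ bdd_above_measure_At_set])

lemma M_t_nonneg: "0 < t \<Longrightarrow> 0 \<le> M_t f g t"
  using supp_sum_nonempty measure_At_set_le_M_t[of t] by (meson equals0I measure_nonneg order.trans)


abbreviation At_nonempty :: "real \<Rightarrow> bool" where
  "At_nonempty t \<equiv> \<exists>x\<in>supp_sum. At_set f g t x \<noteq> {}"

lemma M_t_eq_0: "\<not> At_nonempty t \<Longrightarrow> M_t f g t = 0"
  using supp_sum_nonempty unfolding M_t_def by simp

text \<open>Below the maximal level: pick \<open>z\<close>, \<open>w\<close> with \<open>f z > \<surd>t \<parallel>f\<parallel>\<^sub>\<infinity>\<close> and \<open>g w > \<surd>t \<parallel>g\<parallel>\<^sub>\<infinity>\<close>; then \<open>z \<in> A\<^sub>t(z + w)\<close>.\<close>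
lemma At_nonempty_below_1:
  assumes "0 < t" "t < 1"
  shows "At_nonempty t"
proof -
  define s where "s = sqrt t"
  have s: "0 < s" "s < 1" "s * s = t" using assms unfolding s_def by auto
  obtain z where z: "s * sup_norm f < f z"
    using F.less_sup_norm_iff[of "s * sup_norm f"] s F.sup_norm_pos by auto
  obtain w where w: "s * sup_norm g < g w"
    using G.less_sup_norm_iff[of "s * sup_norm g"] s G.sup_norm_pos by auto
  have "z \<in> supp f" "w \<in> supp g"
    using z w s F.sup_norm_pos G.sup_norm_pos unfolding supp_def
    by (auto intro: less_trans[rotated] simp del: mult_less_cancel_right1)
  hence "z + w \<in> supp_sum" unfolding minkowski_sum_def by blast
  moreover have "(s * sup_norm f) * (s * sup_norm g) \<le> f z * g w"
    using z w s F.sup_norm_pos G.sup_norm_pos by (intro mult_mono) (auto simp: F.nonneg)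
  hence "z \<in> At_set f g t (z + w)"
    using assms unfolding s(3)[symmetric] by (simp add: At_set_eq mult_ac)
  ultimately show ?thesis by blast
qed

text \<open>Brunn--Minkowski needs nonempty sets, so an empty \<open>A\<^sub>t\<^sub>i(x\<^sub>i)\<close> is first replaced by a nonempty
  one, which only increases the left-hand side.\<close>
lemma M_t_powr_concave_nonempty:
  assumes t: "0 < t1" "0 < t2" and l: "0 < l" "l < 1"
    and nonempty: "At_nonempty t1" "At_nonempty t2"
  shows "l * M_t f g t1 powr (1 / DIM('a)) + (1 - l) * M_t f g t2 powr (1 / DIM('a))
         \<le> M_t f g (t1 powr l * t2 powr (1 - l)) powr (1 / DIM('a))"
proof -
  define t where "t = t1 powr l * t2 powr (1 - l)"
  have t0: "0 < t" unfolding t_def using t by simp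
  define m where "m s x = measure lebesgue (At_set f g s x)" for s x
  have BM: "l * m t1 x1 powr (1 / DIM('a)) + (1 - l) * m t2 x2 powr (1 / DIM('a))
      \<le> M_t f g t powr (1 / DIM('a))"
    if x: "x1 \<in> supp_sum" "x2 \<in> supp_sum" "At_set f g t1 x1 \<noteq> {}" "At_set f g t2 x2 \<noteq> {}" for x1 x2
  proof -
    let ?x = "l *\<^sub>R x1 + (1 - l) *\<^sub>R x2"
    have "l * m t1 x1 powr (1 / DIM('a)) + (1 - l) * m t2 x2 powr (1 / DIM('a))
        \<le> m t ?x powr (1 / DIM('a))"
      unfolding m_def
    proof (rule brunn_minkowski_convex[OF convex_At_set[OF t(1)] convex_At_set[OF t(2)]
          convex_At_set[OF t0] x(3,4) l])
      show "emeasure lebesgue (At_set f g t ?x) < \<infinity>"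
        using fmeasurable_At_set[OF t0, of ?x] unfolding fmeasurable_def by blast
    qed (use t l in \<open>auto simp: t_def intro: At_set_convex_combination\<close>)
    also have "\<dots> \<le> M_t f g t powr (1 / DIM('a))"
      using x l convex_supp_sum unfolding m_def convex_alt
      by (intro powr_mono2 measure_At_set_le_M_t[OF t0]) (auto simp: add.commute)
    finally show ?thesis .
  qed
  obtain x1' x2' where x': "x1' \<in> supp_sum" "At_set f g t1 x1' \<noteq> {}"
      "x2' \<in> supp_sum" "At_set f g t2 x2' \<noteq> {}"
    using nonempty by blast
  have "l * m t1 x1 powr (1 / DIM('a)) + (1 - l) * m t2 x2 powr (1 / DIM('a))
      \<le> M_t f g t powr (1 / DIM('a))"
    if "x1 \<in> supp_sum" "x2 \<in> supp_sum" for x1 x2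
  proof -
    define y1 where "y1 = (if At_set f g t1 x1 = {} then x1' else x1)"
    define y2 where "y2 = (if At_set f g t2 x2 = {} then x2' else x2)"
    have "m t1 x1 powr (1 / DIM('a)) \<le> m t1 y1 powr (1 / DIM('a))"
      "m t2 x2 powr (1 / DIM('a)) \<le> m t2 y2 powr (1 / DIM('a))"
      unfolding y1_def y2_def m_def by auto
    moreover have "l * m t1 y1 powr (1 / DIM('a)) + (1 - l) * m t2 y2 powr (1 / DIM('a))
        \<le> M_t f g t powr (1 / DIM('a))"
      using that x' unfolding y1_def y2_def by (intro BM) auto
    ultimately show ?thesis using l by (smt (verit) mult_left_mono)
  qed
  thus ?thesis
    unfolding M_t_def m_def t_def[symmetric]
    using supp_sum_nonempty bdd_above_measure_At_set t l
    by (intro cSUP_powr_add_le) auto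
qed

text \<open>Only the top level \<open>t\<^sub>1 = 1\<close> can have all \<open>A\<^sub>t\<^sub>1(x)\<close> empty. Then \<open>M\<^sub>t\<^sub>1 = 0\<close>, and the claim is the limit
  \<open>a \<rightarrow> l\<close> of the inequality between the levels \<open>\<tau> = t\<^sub>2\<^sup>(\<^sup>a\<^sup>-\<^sup>l\<^sup>)\<^sup>/\<^sup>a < 1\<close> and \<open>t\<^sub>2\<close> with weight \<open>a\<close>, since
  \<open>\<tau>\<^sup>a t\<^sub>2\<^sup>1\<^sup>-\<^sup>a = t\<^sub>2\<^sup>1\<^sup>-\<^sup>l\<close>.\<close>
lemma M_t_powr_concave_empty:
  assumes t: "0 < t1" "t1 \<le> 1" "\<not> At_nonempty t1" "0 < t2" "t2 \<le> 1" "At_nonempty t2"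
    and l: "0 < l" "l < 1"
  shows "l * M_t f g t1 powr (1 / DIM('a)) + (1 - l) * M_t f g t2 powr (1 / DIM('a))
         \<le> M_t f g (t1 powr l * t2 powr (1 - l)) powr (1 / DIM('a))"
proof -
  have "t1 = 1" using At_nonempty_below_1[of t1] t by force
  hence "t2 < 1" using t by (cases "t2 = 1") auto
  have "(1 - l) * M_t f g t2 powr (1 / DIM('a)) \<le> M_t f g (t2 powr (1 - l)) powr (1 / DIM('a))"
  proof (rule field_le_mult_one_interval)
    fix z :: real assume z: "0 < z" "z < 1"
    define a where "a = 1 - z * (1 - l)"
    have "z * (1 - l) < 1 - l" "0 < z * (1 - l)" using z l by simp_all
    hence a: "l < a" "a < 1" by (simp_all add: a_def)
    define \<tau> where "\<tau> = t2 powr ((a - l) / a)"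
    have \<tau>: "0 < \<tau>" "\<tau> < 1"
      using t(4) \<open>t2 < 1\<close> a l powr_less_mono2[of "(a - l) / a" t2 1] by (auto simp: \<tau>_def)
    have "\<tau> powr a * t2 powr (1 - a) = t2 powr (1 - l)"
      using a l t(4) by (simp add: \<tau>_def powr_powr powr_add[symmetric])
    hence "a * M_t f g \<tau> powr (1 / DIM('a)) + (1 - a) * M_t f g t2 powr (1 / DIM('a))
        \<le> M_t f g (t2 powr (1 - l)) powr (1 / DIM('a))"
      using M_t_powr_concave_nonempty[OF \<tau>(1) t(4) _ _ At_nonempty_below_1[OF \<tau>] t(6), of a] a l
      by simp
    moreover have "0 \<le> a * M_t f g \<tau> powr (1 / DIM('a))" using a l by simp
    ultimately show "z * ((1 - l) * M_t f g t2 powr (1 / DIM('a)))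
        \<le> M_t f g (t2 powr (1 - l)) powr (1 / DIM('a))"
      by (simp add: a_def mult.assoc)
  qed
  thus ?thesis using M_t_eq_0[OF t(3)] \<open>t1 = 1\<close> by simp
qed

lemma M_t_powr_concave:
  assumes t: "0 < t1" "t1 \<le> 1" "0 < t2" "t2 \<le> 1" and l: "0 \<le> l" "l \<le> 1"
  shows "l * M_t f g t1 powr (1 / DIM('a)) + (1 - l) * M_t f g t2 powr (1 / DIM('a))
         \<le> M_t f g (t1 powr l * t2 powr (1 - l)) powr (1 / DIM('a))"
proof -
  consider "l = 0" | "l = 1" | "\<not> At_nonempty t1" "\<not> At_nonempty t2"
    | "0 < l" "l < 1" "At_nonempty t1" "At_nonempty t2"
    | "0 < l" "l < 1" "\<not> At_nonempty t1" "At_nonempty t2"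
    | "0 < l" "l < 1" "At_nonempty t1" "\<not> At_nonempty t2"
    using l by fastforce
  then show ?thesis
  proof cases
    case 3
    thus ?thesis using M_t_eq_0 M_t_nonneg[of "t1 powr l * t2 powr (1 - l)"] t by simp
  next
    case 4
    thus ?thesis using M_t_powr_concave_nonempty t(1,3) by blast
  next
    case 5
    thus ?thesis using M_t_powr_concave_empty t by blast
  next
    case 6
    with M_t_powr_concave_empty[OF t(3,4) 6(4) t(1,2) 6(3), of "1 - l"] show ?thesis
      by (simp add: mult.commute add.commute)
  qed (use t in simp_all)
qed

lemma continuous_on_M_t: "continuous_on {0<..<1} (M_t f g)"
proof -
  define \<phi> where "\<phi> u = M_t f g (exp (- u)) powr (1 / DIM('a))" for u :: real
  have "convex_on {0<..} (\<lambda>u. - \<phi> u)"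
  proof (rule convex_onI)
    fix l u1 u2 :: real assume "0 < l" "l < 1" "u1 \<in> {0<..}" "u2 \<in> {0<..}"
    moreover have "exp (- u1) powr (1 - l) * exp (- u2) powr (1 - (1 - l)) = exp (- ((1 - l) * u1 + l * u2))"
      by (simp add: powr_def exp_add[symmetric] algebra_simps)
    ultimately show "- \<phi> ((1 - l) *\<^sub>R u1 + l *\<^sub>R u2) \<le> (1 - l) * - \<phi> u1 + l * - \<phi> u2"
      using M_t_powr_concave[of "exp (- u1)" "exp (- u2)" "1 - l"] unfolding \<phi>_def by simp
  qed simp
  hence "continuous_on {0<..} (\<lambda>u. - \<phi> u)" by (intro convex_on_continuous) auto
  hence "continuous_on {0<..} \<phi>" using continuous_on_minus[of "{0<..}" "\<lambda>u. - \<phi> u"] by simp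
  hence "continuous_on {0<..<1} (\<lambda>t. \<phi> (- ln t))"
    by (rule continuous_on_compose2) (auto intro!: continuous_intros)
  hence "continuous_on {0<..<1} (\<lambda>t. \<phi> (- ln t) ^ DIM('a))" by (intro continuous_intros)
  moreover have "\<phi> (- ln t) ^ DIM('a) = M_t f g t" if "t \<in> {0<..<1}" for t
    using that M_t_nonneg[of t] unfolding \<phi>_def by (simp add: powr_inverse_pow)
  ultimately show ?thesis using continuous_on_cong by (metis (no_types, lifting))
qed

end

theorem lemma3p5:
  fixes f g :: "'a::euclidean_space \<Rightarrow> real"
  assumes "integrable lborel f" and "integrable lborel g"
    and "log_concave f" and "log_concave g"
    and "interior (supp f) \<noteq> {}" and "interior (supp g) \<noteq> {}"
  shows "(\<forall>t1\<in>{0<..1::real}. \<forall>t2\<in>{0<..1::real}. \<forall>l\<in>{0..1::real}.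
            M_t f g (t1 powr l * t2 powr (1 - l)) powr (1 / real DIM('a))
              \<ge> l * M_t f g t1 powr (1 / real DIM('a))
                + (1 - l) * M_t f g t2 powr (1 / real DIM('a)))
         \<and> continuous_on {0<..<1} (M_t f g)"
proof -
  interpret log_concave_pair f g
    by unfold_locales (use assms in auto)
  show ?thesis using M_t_powr_concave continuous_on_M_t by auto
qed

end
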